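(* Let $-1<\gamma_0<\gamma_1$, $I=[\gamma_0,\gamma_1]$ and $J=[0,1/(1+\gamma_0)]$. For $\varepsilon>0$ let $U_\varepsilon=\{z\in\mathbb C:\ \mathrm{Re}\,z\le\gamma_0-\varepsilon \text{ or } \mathrm{Re}\,z\ge\gamma_1+\varepsilon \text{ or } |\mathrm{Im}\,z|\ge\varepsilon\}$. (1) For every $\varphi\in\mathcal O^1(\overline{\mathbb C}\setminus I)$ the series $\sum_{m\ge1}L_{g(m)}\varphi$ converges uniformly on compact subsets of $\overline{\mathbb C}\setminus J$ to a function $T\varphi\in\mathcal O^1(\overline{\mathbb C}\setminus J)$, and for every compact $K\subset\overline{\mathbb C}\setminus J$ there exist $\varepsilon>0$ and $C_K>0$ such that $\sup_K|T\varphi|\le C_K\sup_{U_\varepsilon}|\varphi|$ for all such $\varphi$. (2) For every $\psi\in\mathcal O^3(\overline{\mathbb C}\setminus I)$ the series $\sum_{m\ge1}L^{(3)}_{g(m)}\psi$ converges uniformly on compact subsets of $\overline{\mathbb C}\setminus J$ to a function $T^{(3)}\psi\in\mathcal O^1(\overline{\mathbb C}\setminus J)$, and for every compact $K\subset\overline{\mathbb C}\setminus J$ there exist $\varepsilon>0$ and $C_K>0$ with $\sup_K|T^{(3)}\psi|\le C_K\sup_{U_\varepsilon}|\psi|$ for all such $\psi$. (3) For every $\varphi\in\mathcal O^1(\overline{\mathbb C}\setminus I)$ one has $T^{(3)}(\varphi'')=(T\varphi)''$.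
   Context: $\overline{\mathbb C}=\mathbb C\cup\{\infty\}$. For a compact interval $I\subset\mathbb R$ and $k\in\mathbb Z$, $\mathcal O^k(\overline{\mathbb C}\setminus I)$ denotes the space of functions holomorphic on $\mathbb C\setminus I$ and meromorphic on $\overline{\mathbb C}\setminus I$ having at $\infty$ a zero of order at least $k$ if $k\ge0$ (resp. a pole of order at most $|k|$ if $k<0$). For an integer $m\ge1$, $g(m)$ denotes the matrix $\begin{pmatrix}0&1\\1&m\end{pmatrix}$, and for $\varphi\in\mathcal O^1(\overline{\mathbb C}\setminus I)$, $\psi\in\mathcal O^3(\overline{\mathbb C}\setminus I)$: $L_{g(m)}\varphi(z)=-z\big[\varphi(\tfrac1z-m)-\varphi(-m)\big]+\varphi'(-m)$, and $L^{(3)}_{g(m)}\psi(z)=-z^{-3}\psi(\tfrac1z-m)$. *)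

theory Defs
  imports "HOL-Analysis.Analysis"
begin

text \<open>O^k(Cbar minus S), for a compact S of the complex plane: holomorphic on the
  complement of S and meromorphic at infinity with a zero of order at least k
  (k \<ge> 0) resp. a pole of order at most -k (k < 0); i.e. f(1/w) = w^k g(w) near w = 0
  with g holomorphic at 0.\<close>
definition Ok :: "int \<Rightarrow> complex set \<Rightarrow> (complex \<Rightarrow> complex) \<Rightarrow> bool" where
  "Ok k S f \<longleftrightarrow> f holomorphic_on (- S) \<and>
     (\<exists>r>0. \<exists>g. g holomorphic_on ball 0 r \<and>
        (\<forall>w. 0 < norm w \<and> norm w < r \<and> inverse w \<notin> S \<longrightarrow> f (inverse w) = w powi k * g w))"

definition cinterval :: "real \<Rightarrow> real \<Rightarrow> complex set" where
  "cinterval a b = complex_of_real ` {a..b}"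

definition Lg :: "nat \<Rightarrow> (complex \<Rightarrow> complex) \<Rightarrow> complex \<Rightarrow> complex" where
  "Lg m \<phi> z = - z * (\<phi> (inverse z - of_nat m) - \<phi> (- of_nat m)) + deriv \<phi> (- of_nat m)"

definition Lg3 :: "nat \<Rightarrow> (complex \<Rightarrow> complex) \<Rightarrow> complex \<Rightarrow> complex" where
  "Lg3 m \<psi> z = - (inverse z ^ 3) * \<psi> (inverse z - of_nat m)"

definition Top :: "(complex \<Rightarrow> complex) \<Rightarrow> complex \<Rightarrow> complex" where
  "Top \<phi> z = (\<Sum>m. Lg (Suc m) \<phi> z)"

definition Top3 :: "(complex \<Rightarrow> complex) \<Rightarrow> complex \<Rightarrow> complex" where
  "Top3 \<psi> z = (\<Sum>m. Lg3 (Suc m) \<psi> z)"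

definition Ueps :: "real \<Rightarrow> real \<Rightarrow> real \<Rightarrow> complex set" where
  "Ueps g0 g1 \<epsilon> = {z. Re z \<le> g0 - \<epsilon> \<or> Re z \<ge> g1 + \<epsilon> \<or> \<bar>Im z\<bar> \<ge> \<epsilon>}"

end

(* Write w = 1/z. The m-th term of the first series is -w times the second divided
   difference of phi at -m, evaluated at w - m. The disc of radius kappa*m about -m lies
   left of I, inside U_eps, so the Cauchy estimate and the maximum principle bound that
   divided difference by 10 M / (kappa m)^2, M being a bound for phi on U_eps. For psi in
   O^3 the maximum principle applied at infinity gives |psi(zeta)| = O(M / |zeta|^3), so the
   m-th term of the second series is O(|w|^3 M / m^2). On a closed set K disjoint from J,
   1/z stays bounded and every 1/z - m stays in one fixed U_eps, so both series converge
   uniformly on K by the M-test. Weierstrass' theorem makes the sums holomorphic, the same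
   expansion in w exhibits the zero at infinity, and (3) follows by differentiating the
   locally uniformly convergent series twice term by term, because the second derivative of
   L_g(m) phi is L^(3)_g(m) (phi''). *)

theory Submission
  imports Defs "HOL-Complex_Analysis.Complex_Analysis"
begin

section \<open>Series with inverse-square bounds\<close>

lemma inverse_squares_sums_scaled:
  "(\<lambda>m. A / real (Suc m) ^ 2) sums (A * pi\<^sup>2 / 6)"
  using sums_mult[OF inverse_squares_sums, of A] by (simp add: field_simps)

lemma inverse_square_summable:
  fixes a :: "nat \<Rightarrow> 'a::banach"
  assumes bound: "\<And>m. 1 \<le> m \<Longrightarrow> norm (a m) \<le> A / real m ^ 2"
  shows "summable (\<lambda>m. a (Suc m))" and "norm (\<Sum>m. a (Suc m)) \<le> A * pi\<^sup>2 / 6"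
proof -
  have bound': "norm (a (Suc m)) \<le> A / real (Suc m) ^ 2" for m
    using bound[of "Suc m"] by simp
  note S = inverse_squares_sums_scaled[of A]
  have "summable (\<lambda>m. norm (a (Suc m)))"
    by (rule summable_comparison_test[OF _ sums_summable[OF S]]) (use bound' in auto)
  then show "summable (\<lambda>m. a (Suc m))" by (rule summable_norm_cancel)
  have "norm (\<Sum>m. a (Suc m)) \<le> (\<Sum>m. norm (a (Suc m)))"
    by (rule summable_norm) fact
  also have "\<dots> \<le> (\<Sum>m. A / real (Suc m) ^ 2)"
    using bound' \<open>summable (\<lambda>m. norm (a (Suc m)))\<close> sums_summable[OF S]
    by (rule suminf_le)
  also have "\<dots> = A * pi\<^sup>2 / 6"
    using S by (rule sums_unique[symmetric])
  finally show "norm (\<Sum>m. a (Suc m)) \<le> A * pi\<^sup>2 / 6" .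
qed

lemma sum_atLeast1_atMost_Suc: "(\<Sum>m=1..n. f m) = (\<Sum>i<n. f (Suc i))"
  using sum.atLeast1_atMost_eq[of f n] by simp

lemma uniform_limit_inverse_square_series:
  fixes f :: "nat \<Rightarrow> 'a \<Rightarrow> 'b::banach"
  assumes bound: "\<And>m x. 1 \<le> m \<Longrightarrow> x \<in> K \<Longrightarrow> norm (f m x) \<le> A / real m ^ 2"
  shows "uniform_limit K (\<lambda>n x. \<Sum>m=1..n. f m x) (\<lambda>x. \<Sum>m. f (Suc m) x) sequentially"
proof -
  have "norm (f (Suc i) x) \<le> A / real (Suc i) ^ 2" if "x \<in> K" for i x
    using bound[of "Suc i" x] that by simp
  then have "uniform_limit K (\<lambda>n x. \<Sum>i<n. f (Suc i) x) (\<lambda>x. \<Sum>m. f (Suc m) x) sequentially"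
    by (rule Weierstrass_m_test[OF _ sums_summable[OF inverse_squares_sums_scaled[of A]]])
  then show ?thesis
    unfolding sum_atLeast1_atMost_Suc .
qed

lemma holomorphic_on_inverse_square_series:
  assumes "open S" and hol: "\<And>m. 1 \<le> m \<Longrightarrow> f m holomorphic_on S"
    and bound: "\<And>m x. 1 \<le> m \<Longrightarrow> x \<in> S \<Longrightarrow> norm (f m x) \<le> A / real m ^ 2"
  shows "(\<lambda>x. \<Sum>m. f (Suc m) x) holomorphic_on S"
proof (rule holomorphic_uniform_sequence[OF \<open>open S\<close>])
  show "(\<lambda>x. \<Sum>m=1..n. f m x) holomorphic_on S" for n
    using hol by (intro holomorphic_intros) auto
  fix x assume "x \<in> S"
  then obtain d where d: "0 < d" "cball x d \<subseteq> S"
    using \<open>open S\<close> open_contains_cball by blast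
  have "uniform_limit (cball x d) (\<lambda>n x. \<Sum>m=1..n. f m x) (\<lambda>x. \<Sum>m. f (Suc m) x) sequentially"
    by (rule uniform_limit_inverse_square_series[where A = A]) (use bound d in blast)
  with d show "\<exists>d>0. cball x d \<subseteq> S \<and>
      uniform_limit (cball x d) (\<lambda>n x. \<Sum>m=1..n. f m x) (\<lambda>x. \<Sum>m. f (Suc m) x) sequentially"
    by (intro exI[of _ d] conjI)
qed

lemma higher_deriv_sum:
  fixes z :: complex
  assumes "finite A" "open S" "z \<in> S" and hol: "\<And>i. i \<in> A \<Longrightarrow> f i holomorphic_on S"
  shows "(deriv ^^ n) (\<lambda>w. \<Sum>i\<in>A. f i w) z = (\<Sum>i\<in>A. (deriv ^^ n) (f i) z)"
  using assms(1) hol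
proof (induction A rule: finite_induct)
  case empty
  then show ?case by simp
next
  case (insert a A)
  have "(deriv ^^ n) (\<lambda>w. f a w + (\<Sum>i\<in>A. f i w)) z
        = (deriv ^^ n) (f a) z + (deriv ^^ n) (\<lambda>w. \<Sum>i\<in>A. f i w) z"
    using insert.prems \<open>open S\<close> \<open>z \<in> S\<close> by (intro higher_deriv_add holomorphic_intros) auto
  moreover have "(deriv ^^ n) (\<lambda>w. \<Sum>i\<in>A. f i w) z = (\<Sum>i\<in>A. (deriv ^^ n) (f i) z)"
    using insert.IH insert.prems by blast
  ultimately show ?case
    using insert.hyps by simp
qed

section \<open>Second divided differences\<close>

lemma norm_deriv_le_Cauchy:
  assumes "f holomorphic_on cball a r" "0 < r" and bound: "\<And>z. z \<in> cball a r \<Longrightarrow> norm (f z) \<le> M"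
  shows "norm (deriv f a) \<le> M / r"
proof -
  have "norm ((deriv ^^ 1) f a) \<le> fact 1 * M / r ^ 1"
  proof (rule Cauchy_inequality)
    show "f holomorphic_on ball a r"
      using assms(1) ball_subset_cball by (rule holomorphic_on_subset)
    show "continuous_on (cball a r) f"
      using assms(1) by (rule holomorphic_on_imp_continuous_on)
  qed (use assms in \<open>auto simp: dist_norm\<close>)
  then show ?thesis by simp
qed

definition dslope :: "(complex \<Rightarrow> complex) \<Rightarrow> complex \<Rightarrow> complex \<Rightarrow> complex" where
  "dslope f a z = (if z = a then deriv f a else (f z - f a) / (z - a))"

lemma holomorphic_on_dslope:
  assumes "f holomorphic_on S" "open S"
  shows "dslope f a holomorphic_on S"
proof -
  have "dslope f a = (\<lambda>z. if z = a then deriv f a else (f z - f a) / (z - a))"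
    by (simp add: fun_eq_iff dslope_def)
  then show ?thesis
    using pole_lemma_open[OF assms] by simp
qed

lemma norm_dslope_dslope_le:
  assumes hol: "f holomorphic_on cball a r" and "0 < r"
    and bound: "\<And>z. z \<in> cball a r \<Longrightarrow> norm (f z) \<le> M"
    and \<zeta>: "norm (\<zeta> - a) \<le> r / 2"
  shows "norm (dslope (dslope f a) a \<zeta>) \<le> 10 * M / r\<^sup>2"
proof -
  have hol_ball: "f holomorphic_on ball a r"
    using hol ball_subset_cball by (rule holomorphic_on_subset)
  then have D_hol: "dslope (dslope f a) a holomorphic_on ball a r"
    by (intro holomorphic_on_dslope) auto
  have "cball a (r/2) \<subseteq> ball a r"
    using \<open>0 < r\<close> by (simp add: cball_subset_ball_iff)
  have fa: "norm (f a) \<le> M" and f'a: "norm (deriv f a) \<le> M / r"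
    using bound \<open>0 < r\<close> norm_deriv_le_Cauchy[OF hol \<open>0 < r\<close> bound] by auto
  have "ball a (r/2) \<subseteq> ball a r"
    by (rule subset_ball) (use \<open>0 < r\<close> in simp)
  then have hol_int: "dslope (dslope f a) a holomorphic_on interior (cball a (r/2))"
    using D_hol by (simp add: holomorphic_on_subset)
  have cont: "continuous_on (closure (cball a (r/2))) (dslope (dslope f a) a)"
    using holomorphic_on_imp_continuous_on[OF holomorphic_on_subset[OF D_hol \<open>cball a (r/2) \<subseteq> ball a r\<close>]]
    by simp
  have "\<zeta> \<in> cball a (r/2)"
    using \<zeta> by (simp add: dist_norm norm_minus_commute)
  show ?thesis
  proof (rule maximum_modulus_frontier[OF hol_int cont bounded_cball _ \<open>\<zeta> \<in> cball a (r/2)\<close>])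
    fix z assume "z \<in> frontier (cball a (r/2))"
    then have z: "norm (z - a) = r/2"
      using \<open>0 < r\<close> by (simp add: dist_norm norm_minus_commute)
    then have "z \<noteq> a" "z \<in> cball a r"
      using \<open>0 < r\<close> by (auto simp: dist_norm norm_minus_commute)
    have "norm ((f z - f a) / (z - a) - deriv f a) \<le> norm (f z - f a) / (r/2) + M / r"
      using norm_triangle_ineq4[of "(f z - f a) / (z - a)" "deriv f a"] f'a z
      by (simp add: norm_divide)
    also have "\<dots> \<le> (M + M) / (r/2) + M / r"
      using norm_triangle_ineq4[of "f z" "f a"] bound[OF \<open>z \<in> cball a r\<close>] fa \<open>0 < r\<close>
      by (intro add_right_mono divide_right_mono) auto
    also have "\<dots> = 5 * M / r"
      using \<open>0 < r\<close> by (simp add: field_simps)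
    finally have first_slope: "norm ((f z - f a) / (z - a) - deriv f a) \<le> 5 * M / r" .
    have "norm (dslope (dslope f a) a z) = norm ((f z - f a) / (z - a) - deriv f a) / (r/2)"
      using \<open>z \<noteq> a\<close> by (simp add: dslope_def norm_divide z)
    also have "\<dots> \<le> (5 * M / r) / (r/2)"
      using first_slope by (rule divide_right_mono) (use \<open>0 < r\<close> in simp)
    also have "\<dots> = 10 * M / r\<^sup>2"
      using \<open>0 < r\<close> by (simp add: field_simps power2_eq_square)
    finally show "norm (dslope (dslope f a) a z) \<le> 10 * M / r\<^sup>2" .
  qed
qed

section \<open>The single terms of the two series\<close>

lemma Lg_eq_dslope:
  assumes "z \<noteq> 0"
  shows "Lg m \<phi> z = - inverse z * dslope (dslope \<phi> (- of_nat m)) (- of_nat m) (inverse z - of_nat m)"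
  using assms by (simp add: Lg_def dslope_def field_simps)

lemma norm_Lg_le:
  assumes hol: "\<phi> holomorphic_on cball (- of_nat m) q" and "0 < q"
    and bound: "\<And>\<zeta>. \<zeta> \<in> cball (- of_nat m) q \<Longrightarrow> norm (\<phi> \<zeta>) \<le> M"
    and bound_at: "norm (\<phi> (inverse z - of_nat m)) \<le> M" and "z \<noteq> 0"
  shows "norm (Lg m \<phi> z) \<le> 10 * M * norm (inverse z) / q\<^sup>2"
proof (cases "norm (inverse z) \<le> q / 2")
  case True
  have "norm (Lg m \<phi> z) = norm (inverse z) * norm (dslope (dslope \<phi> (- of_nat m)) (- of_nat m) (inverse z - of_nat m))"
    using \<open>z \<noteq> 0\<close> by (simp add: Lg_eq_dslope norm_mult)
  also have "\<dots> \<le> norm (inverse z) * (10 * M / q\<^sup>2)"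
    using True by (intro mult_left_mono norm_dslope_dslope_le[OF hol \<open>0 < q\<close> bound]) auto
  finally show ?thesis by (simp add: mult.commute)
next
  case False
  have M: "norm (\<phi> (- of_nat m)) \<le> M" "norm (deriv \<phi> (- of_nat m)) \<le> M / q"
    using bound \<open>0 < q\<close> norm_deriv_le_Cauchy[OF hol \<open>0 < q\<close> bound] by auto
  then have "0 \<le> M"
    by (meson norm_ge_zero order_trans)
  have w: "q / 2 < norm (inverse z)"
    using False by simp
  have "norm (Lg m \<phi> z) \<le> norm z * norm (\<phi> (inverse z - of_nat m) - \<phi> (- of_nat m)) + norm (deriv \<phi> (- of_nat m))"
    unfolding Lg_def by (metis norm_minus_cancel norm_mult norm_triangle_ineq)
  also have "\<dots> \<le> (M + M) / norm (inverse z) + M / q"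
  proof (rule add_mono[OF _ M(2)])
    have "norm (\<phi> (inverse z - of_nat m) - \<phi> (- of_nat m)) \<le> M + M"
      using norm_triangle_ineq4[of "\<phi> (inverse z - of_nat m)" "\<phi> (- of_nat m)"] bound_at M(1)
      by linarith
    then show "norm z * norm (\<phi> (inverse z - of_nat m) - \<phi> (- of_nat m)) \<le> (M + M) / norm (inverse z)"
      by (simp add: norm_inverse divide_inverse mult.commute mult_left_mono)
  qed
  also have "\<dots> \<le> (M + M) / (q / 2) + M / q"
    using w \<open>0 < q\<close> \<open>0 \<le> M\<close> by (intro add_right_mono divide_left_mono mult_pos_pos) auto
  also have "\<dots> = 5 * M / q"
    using \<open>0 < q\<close> by (simp add: field_simps)
  also have "\<dots> \<le> 10 * M * norm (inverse z) / q\<^sup>2"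
    using w \<open>0 < q\<close> \<open>0 \<le> M\<close> by (simp add: field_simps power2_eq_square mult_left_mono)
  finally show ?thesis .
qed

lemma open_inverse_shift_preimage:
  fixes c :: complex
  assumes "open A"
  shows "open {z. z \<noteq> 0 \<and> inverse z - c \<in> A}"
proof -
  have "{z. z \<noteq> 0 \<and> inverse z - c \<in> A} = - {0} \<inter> (\<lambda>z. inverse z - c) -` A"
    by auto
  also have "open \<dots>"
  proof (rule continuous_open_preimage[OF _ _ assms])
    show "continuous_on (- {0}) (\<lambda>z. inverse z - c)"
      by (auto intro!: continuous_intros)
  qed auto
  finally show ?thesis .
qed

lemma holomorphic_on_inverse_shift:
  fixes c :: complex
  assumes "f holomorphic_on A"
  shows "(\<lambda>z. f (inverse z - c)) holomorphic_on {z. z \<noteq> 0 \<and> inverse z - c \<in> A}"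
  by (rule holomorphic_on_compose_gen[OF _ assms, unfolded o_def]) (auto intro!: holomorphic_intros)

lemma has_field_derivative_inverse_shift:
  fixes c :: complex
  assumes "f holomorphic_on A" "open A" "x \<noteq> 0" "inverse x - c \<in> A"
  shows "((\<lambda>x. f (inverse x - c)) has_field_derivative
           deriv f (inverse x - c) * - (inverse x * inverse x)) (at x)"
proof (rule DERIV_chain2[where f = f])
  show "(f has_field_derivative deriv f (inverse x - c)) (at (inverse x - c))"
    using assms by (intro holomorphic_derivI)
  show "((\<lambda>x. inverse x - c) has_field_derivative - (inverse x * inverse x)) (at x)"
    using \<open>x \<noteq> 0\<close> by (auto intro!: derivative_eq_intros)
qed

lemma Lg_holomorphic:
  assumes "\<phi> holomorphic_on A"
  shows "Lg m \<phi> holomorphic_on {z. z \<noteq> 0 \<and> inverse z - of_nat m \<in> A}"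
  unfolding Lg_def[abs_def] using holomorphic_on_inverse_shift[OF assms]
  by (intro holomorphic_intros)

lemma Lg3_holomorphic:
  assumes "\<psi> holomorphic_on A"
  shows "Lg3 m \<psi> holomorphic_on {z. z \<noteq> 0 \<and> inverse z - of_nat m \<in> A}"
  unfolding Lg3_def[abs_def] using holomorphic_on_inverse_shift[OF assms]
  by (intro holomorphic_intros) auto

lemma deriv_deriv_Lg:
  assumes hol: "\<phi> holomorphic_on A" and "open A" and z: "z \<noteq> 0" "inverse z - of_nat m \<in> A"
  shows "deriv (deriv (Lg m \<phi>)) z = Lg3 m (deriv (deriv \<phi>)) z"
proof -
  define V where "V = {z. z \<noteq> 0 \<and> inverse z - of_nat m \<in> A}"
  have "open V" "z \<in> V"
    using open_inverse_shift_preimage[OF \<open>open A\<close>] z by (auto simp: V_def)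
  have chain: "((\<lambda>x. f (inverse x - of_nat m)) has_field_derivative
                 deriv f (inverse x - of_nat m) * - (inverse x * inverse x)) (at x)"
    if "f holomorphic_on A" "x \<in> V" for f x
    using that \<open>open A\<close> by (intro has_field_derivative_inverse_shift) (auto simp: V_def)
  have hol': "deriv \<phi> holomorphic_on A"
    using hol \<open>open A\<close> by (rule holomorphic_deriv)
  define D where "D x = - (\<phi> (inverse x - of_nat m) - \<phi> (- of_nat m))
                        + inverse x * deriv \<phi> (inverse x - of_nat m)" for x
  have Lg_deriv: "(Lg m \<phi> has_field_derivative D x) (at x)" if "x \<in> V" for x
  proof -
    have "x \<noteq> 0" using that by (simp add: V_def)
    have "(Lg m \<phi> has_field_derivative
            - (\<phi> (inverse x - of_nat m) - \<phi> (- of_nat m))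
            - x * (deriv \<phi> (inverse x - of_nat m) * - (inverse x * inverse x))) (at x)"
      unfolding Lg_def[abs_def] using chain[OF hol that]
      by (auto intro!: derivative_eq_intros)
    then show ?thesis
      using \<open>x \<noteq> 0\<close> by (simp add: D_def field_simps)
  qed
  have "(D has_field_derivative
          - (deriv \<phi> (inverse z - of_nat m) * - (inverse z * inverse z) - 0)
          + (- (inverse z ^ Suc (Suc 0)) * deriv \<phi> (inverse z - of_nat m)
             + deriv (deriv \<phi>) (inverse z - of_nat m) * - (inverse z * inverse z) * inverse z)) (at z)"
    unfolding D_def[abs_def]
    by (intro DERIV_add DERIV_mult DERIV_diff DERIV_minus DERIV_inverse DERIV_const
        chain[OF hol \<open>z \<in> V\<close>] chain[OF hol' \<open>z \<in> V\<close>] z)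
  then have "(D has_field_derivative Lg3 m (deriv (deriv \<phi>)) z) (at z)"
    by (simp add: Lg3_def power3_eq_cube power2_eq_square algebra_simps)
  then have "(deriv (Lg m \<phi>) has_field_derivative Lg3 m (deriv (deriv \<phi>)) z) (at z)"
    by (rule has_field_derivative_transform_within_open[OF _ \<open>open V\<close> \<open>z \<in> V\<close>])
       (use Lg_deriv DERIV_imp_deriv in metis)
  then show ?thesis
    by (rule DERIV_imp_deriv)
qed

section \<open>Behaviour at infinity\<close>

lemma Ok_holomorphic_at_infinity:
  fixes f :: "complex \<Rightarrow> complex" and k :: nat
  assumes Ok: "Ok (int k) S f" and S: "S \<subseteq> cball 0 R" and "0 < R"
  obtains h where "h holomorphic_on ball 0 (1 / R)"
    and "\<And>u. u \<noteq> 0 \<Longrightarrow> norm u < 1 / R \<Longrightarrow> h u = f (inverse u) / u ^ k"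
proof -
  obtain r g where "r > 0" and g: "g holomorphic_on ball 0 r"
    and expansion: "\<And>w. 0 < norm w \<Longrightarrow> norm w < r \<Longrightarrow> inverse w \<notin> S \<Longrightarrow> f (inverse w) = w ^ k * g w"
    using Ok unfolding Ok_def by (auto simp: power_int_def)
  have f: "f holomorphic_on - cball 0 R"
    using Ok S unfolding Ok_def by (blast intro: holomorphic_on_subset)
  have outside: "inverse u \<notin> cball 0 R" if "u \<noteq> 0" "norm u < 1 / R" for u :: complex
  proof -
    have "R < 1 / norm u"
      using that \<open>0 < R\<close> by (simp add: field_simps)
    then show ?thesis
      by (simp add: norm_inverse divide_inverse)
  qed
  define h where "h u = (if u = 0 then g 0 else f (inverse u) / u ^ k)" for u
  have "h holomorphic_on ball 0 (min r (1 / R))"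
  proof (rule holomorphic_transform[of g])
    show "g holomorphic_on ball 0 (min r (1 / R))"
      using g by (rule holomorphic_on_subset) auto
    fix u :: complex assume u: "u \<in> ball 0 (min r (1 / R))"
    show "g u = h u"
    proof (cases "u = 0")
      case False
      then have "inverse u \<notin> S"
        using u outside[of u] S by auto
      then have "f (inverse u) = u ^ k * g u"
        using u False by (intro expansion) auto
      then show ?thesis
        using False by (simp add: h_def)
    qed (simp add: h_def)
  qed
  moreover have "h holomorphic_on ball 0 (1 / R) - {0}"
  proof (rule holomorphic_transform[of "\<lambda>u. f (inverse u) / u ^ k"])
    have "inverse u \<notin> cball 0 R" if "u \<in> ball 0 (1 / R) - {0}" for u :: complex
      using that by (intro outside) auto
    then have "inverse ` (ball 0 (1 / R) - {0}) \<subseteq> - cball (0 :: complex) R"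
      by blast
    then show "(\<lambda>u. f (inverse u) / u ^ k) holomorphic_on ball 0 (1 / R) - {0}"
      by (intro holomorphic_intros holomorphic_on_compose_gen[OF _ f, unfolded o_def]) auto
  qed (simp add: h_def)
  ultimately have "h holomorphic_on ball 0 (min r (1 / R)) \<union> (ball 0 (1 / R) - {0})"
    by (intro holomorphic_on_Un) auto
  moreover have "ball 0 (1 / R) \<subseteq> ball 0 (min r (1 / R)) \<union> (ball 0 (1 / R) - {0})"
    using \<open>r > 0\<close> \<open>0 < R\<close> by auto
  ultimately have "h holomorphic_on ball 0 (1 / R)"
    by (rule holomorphic_on_subset)
  then show ?thesis
    by (rule that) (simp add: h_def)
qed

lemma Ok_decay:
  fixes f :: "complex \<Rightarrow> complex" and k :: nat
  assumes Ok: "Ok (int k) S f" and S: "S \<subseteq> cball 0 R" and "0 < R" "R < \<rho>"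
    and bound: "\<And>w. norm w = \<rho> \<Longrightarrow> norm (f w) \<le> M" and \<zeta>: "\<rho> \<le> norm \<zeta>"
  shows "norm (f \<zeta>) \<le> M * (\<rho> / norm \<zeta>) ^ k"
proof -
  obtain h where h: "h holomorphic_on ball 0 (1 / R)"
    and h_eq: "\<And>u. u \<noteq> 0 \<Longrightarrow> norm u < 1 / R \<Longrightarrow> h u = f (inverse u) / u ^ k"
    using Ok_holomorphic_at_infinity[OF Ok S \<open>0 < R\<close>] by blast
  have "0 < \<rho>" "\<zeta> \<noteq> 0"
    using \<open>0 < R\<close> \<open>R < \<rho>\<close> \<zeta> by auto
  have "1 / \<rho> < 1 / R"
    using \<open>0 < R\<close> \<open>R < \<rho>\<close> by (simp add: frac_less2)
  then have sub: "cball (0 :: complex) (1 / \<rho>) \<subseteq> ball 0 (1 / R)"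
    by (simp add: cball_subset_ball_iff)
  have "inverse \<zeta> \<in> cball 0 (1 / \<rho>)"
    using \<zeta> \<open>0 < \<rho>\<close> by (simp add: norm_divide divide_simps)
  have "norm (h (inverse \<zeta>)) \<le> M * \<rho> ^ k"
  proof (rule maximum_modulus_frontier[where f = h and \<xi> = "inverse \<zeta>" and S = "cball 0 (1 / \<rho>)"])
    show "h holomorphic_on interior (cball 0 (1 / \<rho>))"
      using holomorphic_on_subset[OF h] sub ball_subset_cball by (metis interior_cball order_trans)
    show "continuous_on (closure (cball 0 (1 / \<rho>))) h"
      using holomorphic_on_imp_continuous_on[OF holomorphic_on_subset[OF h sub]] by simp
    fix u :: complex assume "u \<in> frontier (cball 0 (1 / \<rho>))"
    then have u: "norm u = 1 / \<rho>"
      using \<open>0 < \<rho>\<close> by simp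
    then have "u \<noteq> 0" "norm (inverse u) = \<rho>" "norm u < 1 / R"
      using \<open>0 < \<rho>\<close> \<open>1 / \<rho> < 1 / R\<close> by (auto simp: norm_inverse)
    then have "norm (h u) = norm (f (inverse u)) * \<rho> ^ k"
      using u by (simp add: h_eq norm_divide norm_power power_one_over)
    also have "\<dots> \<le> M * \<rho> ^ k"
      using bound[OF \<open>norm (inverse u) = \<rho>\<close>] \<open>0 < \<rho>\<close> by (simp add: mult_right_mono)
    finally show "norm (h u) \<le> M * \<rho> ^ k" .
  qed (simp, fact)
  moreover have "norm (inverse \<zeta>) < 1 / R"
    using \<open>inverse \<zeta> \<in> cball 0 (1 / \<rho>)\<close> \<open>1 / \<rho> < 1 / R\<close> by simp
  then have "h (inverse \<zeta>) = f \<zeta> * \<zeta> ^ k"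
    using \<open>\<zeta> \<noteq> 0\<close> by (simp add: h_eq power_inverse divide_inverse)
  then have "norm (f \<zeta>) = norm (h (inverse \<zeta>)) / norm \<zeta> ^ k"
    using \<open>\<zeta> \<noteq> 0\<close> by (simp add: norm_mult norm_power)
  ultimately have "norm (f \<zeta>) \<le> M * \<rho> ^ k / norm \<zeta> ^ k"
    by (simp add: divide_right_mono)
  then show ?thesis
    by (simp add: power_divide)
qed

lemma Ok_bounded_on_closed:
  fixes f :: "complex \<Rightarrow> complex" and k :: nat
  assumes Ok: "Ok (int k) S f" and S: "S \<subseteq> cball 0 R" "0 < R"
    and "closed T" "T \<inter> S = {}"
  obtains M where "\<And>w. w \<in> T \<Longrightarrow> norm (f w) \<le> M"
proof -
  define \<rho> where "\<rho> = R + 1"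
  define C where "C = (T \<inter> cball 0 \<rho>) \<union> sphere 0 \<rho>"
  have "compact C"
    unfolding C_def using \<open>closed T\<close> by (intro compact_Un closed_Int_compact) auto
  moreover have "C \<subseteq> - S"
    using S \<open>T \<inter> S = {}\<close> by (auto simp: C_def \<rho>_def)
  then have "continuous_on C f"
    using Ok unfolding Ok_def by (blast intro: continuous_on_subset holomorphic_on_imp_continuous_on)
  ultimately obtain M where M: "\<And>w. w \<in> C \<Longrightarrow> norm (f w) \<le> M"
    by (metis compact_continuous_image compact_imp_bounded bounded_iff imageI)
  have "of_real \<rho> \<in> C"
    using \<open>0 < R\<close> by (simp add: C_def \<rho>_def)
  then have "0 \<le> M"
    using M norm_ge_zero order_trans by blast
  show ?thesis
  proof (rule that)
    fix w assume "w \<in> T"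
    show "norm (f w) \<le> M"
    proof (cases "norm w \<le> \<rho>")
      case True
      then show ?thesis using M \<open>w \<in> T\<close> by (auto simp: C_def)
    next
      case False
      have "norm (f w) \<le> M * (\<rho> / norm w) ^ k"
        using False S M by (intro Ok_decay[OF Ok]) (auto simp: C_def \<rho>_def)
      also have "\<dots> \<le> M * 1"
        using False \<open>0 \<le> M\<close> \<open>0 < R\<close> by (intro mult_left_mono power_le_one) (auto simp: \<rho>_def divide_le_eq_1)
      finally show ?thesis by simp
    qed
  qed
qed

section \<open>The intervals and the sets U_eps\<close>

lemma mem_cinterval_iff: "z \<in> cinterval a b \<longleftrightarrow> Im z = 0 \<and> a \<le> Re z \<and> Re z \<le> b"
  unfolding cinterval_def by (auto simp: complex_eq_iff intro!: image_eqI[where x = "Re z"])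

lemma compact_cinterval: "compact (cinterval a b)"
  unfolding cinterval_def by (intro compact_continuous_image continuous_intros) auto

lemma cinterval_subset_cball: "cinterval a b \<subseteq> cball 0 (\<bar>a\<bar> + \<bar>b\<bar>)"
proof
  fix z assume "z \<in> cinterval a b"
  then have "norm z = \<bar>Re z\<bar>"
    by (simp add: mem_cinterval_iff cmod_eq_Re)
  also have "\<dots> \<le> \<bar>a\<bar> + \<bar>b\<bar>"
    using \<open>z \<in> cinterval a b\<close> by (auto simp: mem_cinterval_iff)
  finally show "z \<in> cball 0 (\<bar>a\<bar> + \<bar>b\<bar>)" by simp
qed

lemma closed_Ueps: "closed (Ueps a b \<epsilon>)"
proof -
  have "Ueps a b \<epsilon> = {z. Re z \<le> a - \<epsilon>} \<union> {z. b + \<epsilon> \<le> Re z} \<union> {z. \<epsilon> \<le> \<bar>Im z\<bar>}"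
    by (auto simp: Ueps_def)
  moreover have "closed {z. Re z \<le> a - \<epsilon>}" "closed {z. b + \<epsilon> \<le> Re z}" "closed {z. \<epsilon> \<le> \<bar>Im z\<bar>}"
    by (auto intro!: closed_Collect_le continuous_intros)
  ultimately show ?thesis
    by (metis closed_Un)
qed

lemma Ueps_disjoint_cinterval: "0 < \<epsilon> \<Longrightarrow> Ueps a b \<epsilon> \<inter> cinterval a b = {}"
  by (auto simp: Ueps_def mem_cinterval_iff)

lemma large_in_Ueps:
  assumes "\<epsilon> \<le> 1/2" and "\<bar>a\<bar> + \<bar>b\<bar> + 1 \<le> norm z"
  shows "z \<in> Ueps a b \<epsilon>"
proof (rule ccontr)
  assume "z \<notin> Ueps a b \<epsilon>"
  then have "\<bar>Re z\<bar> < \<bar>a\<bar> + \<bar>b\<bar> + \<epsilon>" "\<bar>Im z\<bar> < \<epsilon>"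
    by (auto simp: Ueps_def)
  then have "norm z < \<bar>a\<bar> + \<bar>b\<bar> + 1"
    using cmod_le[of z] \<open>\<epsilon> \<le> 1/2\<close> by linarith
  with assms(2) show False by simp
qed

lemma shifted_norm_lower_bound:
  fixes w :: complex
  assumes "norm w \<le> B" "0 < \<rho>" "1 \<le> m"
  shows "\<rho> * m \<le> (B + \<rho>) * max \<rho> (norm (w - of_nat m))"
proof (cases "m \<le> B + \<rho>")
  case True
  then have "\<rho> * m \<le> \<rho> * (B + \<rho>)"
    using \<open>0 < \<rho>\<close> by simp
  also have "\<dots> \<le> (B + \<rho>) * max \<rho> (norm (w - of_nat m))"
    using True \<open>0 < \<rho>\<close> \<open>1 \<le> m\<close> by (simp add: mult.commute mult_left_mono)
  finally show ?thesis .
next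
  case False
  have "m - B \<le> norm (w - of_nat m)"
    using norm_triangle_ineq2[of "of_nat m" w] assms(1) by (simp add: norm_minus_commute)
  moreover have "0 \<le> B"
    using assms(1) by (rule order_trans[OF norm_ge_zero])
  ultimately have "(B + \<rho>) * (m - B) \<le> (B + \<rho>) * max \<rho> (norm (w - of_nat m))"
    using \<open>0 < \<rho>\<close> by (intro mult_left_mono) auto
  moreover have "0 \<le> B * (m - B - \<rho>)"
    using False \<open>0 \<le> B\<close> by simp
  then have "\<rho> * m \<le> (B + \<rho>) * (m - B)"
    by (simp add: algebra_simps)
  ultimately show ?thesis by linarith
qed

section \<open>The two transfer operators\<close>

locale gauss_transfer =
  fixes \<gamma>0 \<gamma>1 :: real
  assumes \<gamma>0_gt: "-1 < \<gamma>0"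
begin

abbreviation I :: "complex set" where "I \<equiv> cinterval \<gamma>0 \<gamma>1"
abbreviation J :: "complex set" where "J \<equiv> cinterval 0 (1 / (1 + \<gamma>0))"
abbreviation U :: "real \<Rightarrow> complex set" where "U \<equiv> Ueps \<gamma>0 \<gamma>1"

definition \<kappa> :: real where "\<kappa> = min (1 + \<gamma>0) 1 / 2"

lemma \<kappa>_pos: "0 < \<kappa>"
  using \<gamma>0_gt by (simp add: \<kappa>_def)

lemma cball_neg_nat_subset:
  assumes "1 \<le> m" "\<epsilon> \<le> (1 + \<gamma>0) / 2"
  shows "cball (- of_nat m) (\<kappa> * m) \<subseteq> U \<epsilon> - I"
proof
  fix \<zeta> :: complex assume "\<zeta> \<in> cball (- of_nat m) (\<kappa> * m)"
  then have "Re \<zeta> + m \<le> \<kappa> * m"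
    using abs_Re_le_cmod[of "\<zeta> + of_nat m"] by (simp add: dist_norm norm_minus_commute add.commute)
  moreover have "\<kappa> \<le> 1/2" "\<kappa> \<le> (1 + \<gamma>0) / 2"
    by (auto simp: \<kappa>_def)
  moreover have "(1 - \<kappa>) * 1 \<le> (1 - \<kappa>) * m"
    using \<open>1 \<le> m\<close> \<open>\<kappa> \<le> 1/2\<close> by (intro mult_left_mono) auto
  ultimately have "Re \<zeta> \<le> (\<gamma>0 - 1) / 2"
    by (simp add: algebra_simps)
  then show "\<zeta> \<in> U \<epsilon> - I"
    using assms(2) \<gamma>0_gt by (auto simp: Ueps_def mem_cinterval_iff)
qed

lemma inverse_shift_notin_I:
  assumes "z \<notin> J" "1 \<le> m"
  shows "z \<noteq> 0" and "inverse z - of_nat m \<notin> I"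
proof -
  show "z \<noteq> 0"
    using assms(1) \<gamma>0_gt by (auto simp: mem_cinterval_iff)
  show "inverse z - of_nat m \<notin> I"
  proof
    assume "inverse z - of_nat m \<in> I"
    define p where "p = Re (inverse z)"
    have "inverse z = of_real p" and p: "1 + \<gamma>0 \<le> p"
      using \<open>inverse z - of_nat m \<in> I\<close> \<open>1 \<le> m\<close> by (auto simp: mem_cinterval_iff complex_eq_iff p_def)
    then have "z = of_real (1 / p)"
      by (metis inverse_inverse_eq of_real_inverse inverse_eq_divide)
    moreover have "0 \<le> 1 / p" "1 / p \<le> 1 / (1 + \<gamma>0)"
      using p \<gamma>0_gt by (auto intro!: divide_left_mono)
    ultimately show False
      using assms(1) by (simp add: mem_cinterval_iff)
  qed
qed

(* If 1/z - m is close to I, then 1/z is close to a real p >= m + gamma0 >= 1 + gamma0,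
   so z is close to 1/p, a point of J. *)
lemma near_J_if_notin_U:
  assumes "\<epsilon> \<le> (1 + \<gamma>0) / 4" "1 \<le> m" "z \<noteq> 0" "inverse z - of_nat m \<notin> U \<epsilon>"
  shows "\<exists>y\<in>J. dist y z < 4 * \<epsilon> / (1 + \<gamma>0)\<^sup>2"
proof -
  define d where "d = 1 + \<gamma>0"
  define w where "w = inverse z"
  have "0 < d" "w \<noteq> 0"
    using \<gamma>0_gt \<open>z \<noteq> 0\<close> by (auto simp: d_def w_def)
  have h: "\<gamma>0 - \<epsilon> < Re w - m" "Re w - m < \<gamma>1 + \<epsilon>" "\<bar>Im w\<bar> < \<epsilon>"
    using assms(4) by (auto simp: Ueps_def w_def)
  define p where "p = m + max \<gamma>0 (min \<gamma>1 (Re w - m))"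
  have "\<bar>Re w - p\<bar> < \<epsilon>"
    using h by (auto simp: p_def)
  have "d \<le> p"
    using \<open>1 \<le> m\<close> by (simp add: p_def d_def)
  have wp: "norm (w - of_real p) < 2 * \<epsilon>"
    using cmod_le[of "w - of_real p"] \<open>\<bar>Re w - p\<bar> < \<epsilon>\<close> h(3) by simp
  have "p \<le> norm w + 2 * \<epsilon>"
    using norm_triangle_ineq2[of "of_real p" w] wp \<open>0 < d\<close> \<open>d \<le> p\<close>
    by (simp add: norm_minus_commute)
  then have "d / 2 \<le> norm w"
    using \<open>d \<le> p\<close> assms(1) by (simp add: d_def)
  have "complex_of_real (1 / p) \<in> J"
    using \<open>d \<le> p\<close> \<open>0 < d\<close> by (auto simp: mem_cinterval_iff d_def intro!: divide_left_mono)
  moreover have "dist (complex_of_real (1 / p)) z < 4 * \<epsilon> / d\<^sup>2"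
  proof -
    have "complex_of_real (1 / p) - z = (w - of_real p) / (w * of_real p)"
      using \<open>w \<noteq> 0\<close> \<open>0 < d\<close> \<open>d \<le> p\<close> by (simp add: w_def field_simps)
    then have "dist (complex_of_real (1 / p)) z = norm (w - of_real p) / (norm w * p)"
      using \<open>0 < d\<close> \<open>d \<le> p\<close> by (simp add: dist_norm norm_divide norm_mult)
    also have "\<dots> < 2 * \<epsilon> / (norm w * p)"
      using wp \<open>w \<noteq> 0\<close> \<open>0 < d\<close> \<open>d \<le> p\<close> by (intro divide_strict_right_mono) auto
    also have "\<dots> \<le> 2 * \<epsilon> / (d / 2 * d)"
      using h(3) \<open>d / 2 \<le> norm w\<close> \<open>d \<le> p\<close> \<open>0 < d\<close>
      by (intro divide_left_mono mult_mono mult_pos_pos) auto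
    also have "\<dots> = 4 * \<epsilon> / d\<^sup>2"
      by (simp add: field_simps power2_eq_square)
    finally show ?thesis .
  qed
  ultimately show ?thesis
    unfolding d_def by blast
qed

lemma closed_disjoint_J_bounds:
  assumes "closed K" "K \<inter> J = {}"
  obtains \<epsilon> B where "0 < \<epsilon>" "\<epsilon> \<le> (1 + \<gamma>0) / 4" "\<epsilon> \<le> 1/2" "0 < B"
    and "\<And>z. z \<in> K \<Longrightarrow> z \<noteq> 0 \<and> norm (inverse z) \<le> B"
    and "\<And>z m. z \<in> K \<Longrightarrow> 1 \<le> m \<Longrightarrow> inverse z - of_nat m \<in> U \<epsilon>"
proof -
  obtain \<delta> where "0 < \<delta>" and sep: "\<And>x y. x \<in> J \<Longrightarrow> y \<in> K \<Longrightarrow> \<delta> \<le> dist x y"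
    using separate_compact_closed[OF compact_cinterval \<open>closed K\<close>] assms(2) by blast
  define d where "d = 1 + \<gamma>0"
  have "0 < d" using \<gamma>0_gt by (simp add: d_def)
  define \<epsilon> where "\<epsilon> = min (d / 4) (min (1/2) (\<delta> * d\<^sup>2 / 4))"
  have \<epsilon>: "0 < \<epsilon>" "\<epsilon> \<le> d / 4" "\<epsilon> \<le> 1/2" "4 * \<epsilon> / d\<^sup>2 \<le> \<delta>"
    using \<open>0 < d\<close> \<open>0 < \<delta>\<close> by (auto simp: \<epsilon>_def field_simps)
  have "0 \<in> J"
    using \<gamma>0_gt by (simp add: mem_cinterval_iff)
  show ?thesis
  proof (rule that[of \<epsilon> "inverse \<delta>"])
    fix z assume "z \<in> K"
    then have "\<delta> \<le> norm z"
      using sep[OF \<open>0 \<in> J\<close>] by simp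
    then show "z \<noteq> 0 \<and> norm (inverse z) \<le> inverse \<delta>"
      using le_imp_inverse_le[OF \<open>\<delta> \<le> norm z\<close> \<open>0 < \<delta>\<close>] \<open>0 < \<delta>\<close>
      by (metis norm_inverse norm_zero not_le)
    fix m :: nat assume "1 \<le> m"
    show "inverse z - of_nat m \<in> U \<epsilon>"
    proof (rule ccontr)
      assume "inverse z - of_nat m \<notin> U \<epsilon>"
      moreover have "z \<noteq> 0"
        using \<open>\<delta> \<le> norm z\<close> \<open>0 < \<delta>\<close> by auto
      moreover have "\<epsilon> \<le> (1 + \<gamma>0) / 4"
        using \<epsilon>(2) by (simp add: d_def)
      ultimately obtain y where "y \<in> J" "dist y z < 4 * \<epsilon> / d\<^sup>2"
        using near_J_if_notin_U[OF _ \<open>1 \<le> m\<close>] unfolding d_def by blast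
      then have "dist y z < \<delta>"
        using \<epsilon>(4) by linarith
      with sep[OF \<open>y \<in> J\<close> \<open>z \<in> K\<close>] show False by simp
    qed
  qed (use \<epsilon> \<open>0 < \<delta>\<close> in \<open>auto simp: d_def\<close>)
qed

definition \<rho> :: real where "\<rho> = \<bar>\<gamma>0\<bar> + \<bar>\<gamma>1\<bar> + 1"

lemma \<rho>_pos: "0 < \<rho>"
  by (simp add: \<rho>_def add_nonneg_pos)

lemma I_subset_cball: "I \<subseteq> cball 0 (\<rho> - 1/2)"
  using cinterval_subset_cball[of \<gamma>0 \<gamma>1] by (auto simp: \<rho>_def)

lemma Ok_bounded_on_U:
  assumes "Ok (int k) I f" "0 < \<epsilon>"
  obtains M where "\<And>w. w \<in> U \<epsilon> \<Longrightarrow> norm (f w) \<le> M"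
proof -
  have "0 < \<rho> - 1/2"
    by (simp add: \<rho>_def add_nonneg_pos)
  from Ok_bounded_on_closed[OF assms(1) I_subset_cball this closed_Ueps Ueps_disjoint_cinterval[OF assms(2)]]
  show ?thesis
    using that by blast
qed

lemma bound_on_U_nonneg:
  assumes "\<And>w. w \<in> U \<epsilon> \<Longrightarrow> norm (f w) \<le> M"
  shows "0 \<le> M"
proof -
  have "complex_of_real (\<gamma>0 - \<bar>\<epsilon>\<bar>) \<in> U \<epsilon>"
    by (simp add: Ueps_def abs_ge_self)
  from assms[OF this] show ?thesis
    using norm_ge_zero order_trans by blast
qed

lemma norm_Lg_le_U:
  assumes hol: "\<phi> holomorphic_on - I" and "\<epsilon> \<le> (1 + \<gamma>0) / 2"
    and bound: "\<And>w. w \<in> U \<epsilon> \<Longrightarrow> norm (\<phi> w) \<le> M"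
    and "1 \<le> m" "z \<noteq> 0" "inverse z - of_nat m \<in> U \<epsilon>"
  shows "norm (Lg m \<phi> z) \<le> 10 * M * norm (inverse z) / (\<kappa> * m)\<^sup>2"
proof (rule norm_Lg_le)
  have sub: "cball (- of_nat m) (\<kappa> * m) \<subseteq> U \<epsilon> - I"
    using cball_neg_nat_subset \<open>1 \<le> m\<close> \<open>\<epsilon> \<le> (1 + \<gamma>0) / 2\<close> by blast
  then show "\<phi> holomorphic_on cball (- of_nat m) (\<kappa> * m)"
    by (blast intro: holomorphic_on_subset[OF hol])
  show "norm (\<phi> \<zeta>) \<le> M" if "\<zeta> \<in> cball (- of_nat m) (\<kappa> * m)" for \<zeta>
    using sub that bound by blast
  show "0 < \<kappa> * m"
    using \<kappa>_pos \<open>1 \<le> m\<close> by simp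
qed (use assms bound in auto)

lemma norm_Ok3_le:
  assumes Ok: "Ok 3 I \<psi>" and "\<epsilon> \<le> 1/2"
    and bound: "\<And>w. w \<in> U \<epsilon> \<Longrightarrow> norm (\<psi> w) \<le> M" and "\<zeta> \<in> U \<epsilon>"
  shows "norm (\<psi> \<zeta>) \<le> M * (\<rho> / max \<rho> (norm \<zeta>)) ^ 3"
proof (cases "norm \<zeta> \<le> \<rho>")
  case True
  then show ?thesis
    using bound[OF \<open>\<zeta> \<in> U \<epsilon>\<close>] \<rho>_pos by simp
next
  case False
  have "Ok (int 3) I \<psi>"
    using Ok by simp
  from Ok_decay[OF this I_subset_cball] have "norm (\<psi> \<zeta>) \<le> M * (\<rho> / norm \<zeta>) ^ 3"
    using False \<rho>_pos bound large_in_Ueps[OF \<open>\<epsilon> \<le> 1/2\<close>] by (auto simp: \<rho>_def)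
  then show ?thesis
    using False by simp
qed

lemma norm_Ok3_shift_le:
  assumes Ok: "Ok 3 I \<psi>" and "\<epsilon> \<le> 1/2"
    and bound: "\<And>w. w \<in> U \<epsilon> \<Longrightarrow> norm (\<psi> w) \<le> M"
    and "1 \<le> m" "norm w \<le> B" "w - of_nat m \<in> U \<epsilon>"
  shows "norm (\<psi> (w - of_nat m)) \<le> M * (B + \<rho>) ^ 3 / real m ^ 2"
proof -
  have "0 \<le> M"
    by (rule bound_on_U_nonneg[OF bound])
  have "0 \<le> B"
    using \<open>norm w \<le> B\<close> by (rule order_trans[OF norm_ge_zero])
  define X where "X = max \<rho> (norm (w - of_nat m))"
  have "0 < X" "0 < real m"
    using \<rho>_pos \<open>1 \<le> m\<close> by (auto simp: X_def)
  have "\<rho> / X = (\<rho> * m) / (X * m)"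
    using \<open>0 < real m\<close> by simp
  also have "\<dots> \<le> ((B + \<rho>) * X) / (X * m)"
    using shifted_norm_lower_bound[OF \<open>norm w \<le> B\<close> \<rho>_pos \<open>1 \<le> m\<close>] \<open>0 < X\<close> \<open>0 < real m\<close>
    by (intro divide_right_mono) (auto simp: X_def)
  also have "\<dots> = (B + \<rho>) / m"
    using \<open>0 < X\<close> by simp
  finally have "(\<rho> / X) ^ 3 \<le> ((B + \<rho>) / m) ^ 3"
    using \<rho>_pos \<open>0 < X\<close> by (intro power_mono) auto
  also have "\<dots> \<le> (B + \<rho>) ^ 3 / real m ^ 2"
    using \<open>1 \<le> m\<close> \<open>0 \<le> B\<close> \<rho>_pos
    by (simp add: power_divide divide_left_mono power_increasing)
  finally have "M * (\<rho> / X) ^ 3 \<le> M * ((B + \<rho>) ^ 3 / real m ^ 2)"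
    using \<open>0 \<le> M\<close> by (rule mult_left_mono)
  then show ?thesis
    using norm_Ok3_le[OF Ok \<open>\<epsilon> \<le> 1/2\<close> bound \<open>w - of_nat m \<in> U \<epsilon>\<close>] by (simp add: X_def)
qed

lemma norm_Lg3_le_U:
  assumes Ok: "Ok 3 I \<psi>" and "\<epsilon> \<le> 1/2"
    and bound: "\<And>w. w \<in> U \<epsilon> \<Longrightarrow> norm (\<psi> w) \<le> M"
    and "1 \<le> m" "norm (inverse z) \<le> B" "inverse z - of_nat m \<in> U \<epsilon>"
  shows "norm (Lg3 m \<psi> z) \<le> B ^ 3 * M * (B + \<rho>) ^ 3 / real m ^ 2"
proof -
  have "norm (Lg3 m \<psi> z) = norm (inverse z) ^ 3 * norm (\<psi> (inverse z - of_nat m))"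
    by (simp add: Lg3_def norm_mult norm_power)
  also have "\<dots> \<le> B ^ 3 * (M * (B + \<rho>) ^ 3 / real m ^ 2)"
    using norm_Ok3_shift_le[OF assms] \<open>norm (inverse z) \<le> B\<close>
    by (intro mult_mono power_mono) (auto intro: order_trans[OF norm_ge_zero])
  finally show ?thesis by simp
qed

lemma Top_estimate:
  assumes "closed K" "K \<inter> J = {}"
  obtains \<epsilon> C where "0 < \<epsilon>" "0 < C"
    and "\<And>\<phi> M. \<phi> holomorphic_on - I \<Longrightarrow> (\<And>w. w \<in> U \<epsilon> \<Longrightarrow> norm (\<phi> w) \<le> M) \<Longrightarrow>
           uniform_limit K (\<lambda>n z. \<Sum>m=1..n. Lg m \<phi> z) (Top \<phi>) sequentially \<and>
           (\<forall>z\<in>K. norm (Top \<phi> z) \<le> C * M)"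
proof -
  obtain \<epsilon> B where "0 < \<epsilon>" "\<epsilon> \<le> (1 + \<gamma>0) / 4" "0 < B"
    and K_B: "\<And>z. z \<in> K \<Longrightarrow> z \<noteq> 0 \<and> norm (inverse z) \<le> B"
    and K_U: "\<And>z m. z \<in> K \<Longrightarrow> 1 \<le> m \<Longrightarrow> inverse z - of_nat m \<in> U \<epsilon>"
    using closed_disjoint_J_bounds[OF assms] by metis
  define C where "C = 10 * B / \<kappa>\<^sup>2 * (pi\<^sup>2 / 6)"
  have "0 < C"
    using \<open>0 < B\<close> \<kappa>_pos by (simp add: C_def)
  moreover have "uniform_limit K (\<lambda>n z. \<Sum>m=1..n. Lg m \<phi> z) (Top \<phi>) sequentially \<and>
           (\<forall>z\<in>K. norm (Top \<phi> z) \<le> C * M)"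
    if hol: "\<phi> holomorphic_on - I" and bound: "\<And>w. w \<in> U \<epsilon> \<Longrightarrow> norm (\<phi> w) \<le> M" for \<phi> M
  proof -
    have "0 \<le> M"
      by (rule bound_on_U_nonneg[OF bound])
    have terms: "norm (Lg m \<phi> z) \<le> 10 * M * B / \<kappa>\<^sup>2 / real m ^ 2" if "1 \<le> m" "z \<in> K" for m z
    proof -
      have "norm (Lg m \<phi> z) \<le> 10 * M * norm (inverse z) / (\<kappa> * m)\<^sup>2"
        using K_B K_U that \<open>\<epsilon> \<le> (1 + \<gamma>0) / 4\<close> \<gamma>0_gt by (intro norm_Lg_le_U[OF hol _ bound]) auto
      also have "\<dots> \<le> 10 * M * B / (\<kappa> * m)\<^sup>2"
        using K_B[OF \<open>z \<in> K\<close>] \<open>0 \<le> M\<close> by (intro divide_right_mono mult_left_mono) auto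
      finally show ?thesis
        by (simp add: power_mult_distrib)
    qed
    have "Top \<phi> = (\<lambda>z. \<Sum>m. Lg (Suc m) \<phi> z)"
      by (simp add: fun_eq_iff Top_def)
    moreover have "norm (\<Sum>m. Lg (Suc m) \<phi> z) \<le> C * M" if "z \<in> K" for z
      using inverse_square_summable(2)[of "\<lambda>m. Lg m \<phi> z", OF terms[OF _ that]]
      by (simp add: C_def field_simps)
    ultimately show ?thesis
      using uniform_limit_inverse_square_series[OF terms] by simp
  qed
  ultimately show ?thesis
    using that \<open>0 < \<epsilon>\<close> by blast
qed

lemma Top3_estimate:
  assumes "closed K" "K \<inter> J = {}"
  obtains \<epsilon> C where "0 < \<epsilon>" "0 < C"
    and "\<And>\<psi> M. Ok 3 I \<psi> \<Longrightarrow> (\<And>w. w \<in> U \<epsilon> \<Longrightarrow> norm (\<psi> w) \<le> M) \<Longrightarrow>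
           uniform_limit K (\<lambda>n z. \<Sum>m=1..n. Lg3 m \<psi> z) (Top3 \<psi>) sequentially \<and>
           (\<forall>z\<in>K. norm (Top3 \<psi> z) \<le> C * M)"
proof -
  obtain \<epsilon> B where "0 < \<epsilon>" "\<epsilon> \<le> 1/2" "0 < B"
    and K_B: "\<And>z. z \<in> K \<Longrightarrow> z \<noteq> 0 \<and> norm (inverse z) \<le> B"
    and K_U: "\<And>z m. z \<in> K \<Longrightarrow> 1 \<le> m \<Longrightarrow> inverse z - of_nat m \<in> U \<epsilon>"
    using closed_disjoint_J_bounds[OF assms] by metis
  define C where "C = B ^ 3 * (B + \<rho>) ^ 3 * (pi\<^sup>2 / 6)"
  have "0 < C"
    using \<open>0 < B\<close> \<rho>_pos by (simp add: C_def)
  moreover have "uniform_limit K (\<lambda>n z. \<Sum>m=1..n. Lg3 m \<psi> z) (Top3 \<psi>) sequentially \<and>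
           (\<forall>z\<in>K. norm (Top3 \<psi> z) \<le> C * M)"
    if Ok: "Ok 3 I \<psi>" and bound: "\<And>w. w \<in> U \<epsilon> \<Longrightarrow> norm (\<psi> w) \<le> M" for \<psi> M
  proof -
    have terms: "norm (Lg3 m \<psi> z) \<le> B ^ 3 * M * (B + \<rho>) ^ 3 / real m ^ 2" if "1 \<le> m" "z \<in> K" for m z
      using K_B K_U that by (intro norm_Lg3_le_U[OF Ok \<open>\<epsilon> \<le> 1/2\<close> bound]) auto
    have "Top3 \<psi> = (\<lambda>z. \<Sum>m. Lg3 (Suc m) \<psi> z)"
      by (simp add: fun_eq_iff Top3_def)
    moreover have "norm (\<Sum>m. Lg3 (Suc m) \<psi> z) \<le> C * M" if "z \<in> K" for z
      using inverse_square_summable(2)[of "\<lambda>m. Lg3 m \<psi> z", OF terms[OF _ that]]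
      by (simp add: C_def field_simps)
    ultimately show ?thesis
      using uniform_limit_inverse_square_series[OF terms] by simp
  qed
  ultimately show ?thesis
    using that \<open>0 < \<epsilon>\<close> by blast
qed

lemma Top_bound:
  assumes "closed K" "K \<inter> J = {}"
  shows "\<exists>\<epsilon>>0. \<exists>C>0. \<forall>\<phi>. Ok 1 I \<phi> \<longrightarrow>
           (\<forall>M. (\<forall>w\<in>U \<epsilon>. norm (\<phi> w) \<le> M) \<longrightarrow> (\<forall>z\<in>K. norm (Top \<phi> z) \<le> C * M))"
proof -
  obtain \<epsilon> C where "0 < \<epsilon>" "0 < C" and estimate: "\<And>\<phi> M. \<phi> holomorphic_on - I \<Longrightarrow>
      (\<And>w. w \<in> U \<epsilon> \<Longrightarrow> norm (\<phi> w) \<le> M) \<Longrightarrow>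
      uniform_limit K (\<lambda>n z. \<Sum>m=1..n. Lg m \<phi> z) (Top \<phi>) sequentially \<and> (\<forall>z\<in>K. norm (Top \<phi> z) \<le> C * M)"
    using Top_estimate[OF assms] by metis
  have "\<forall>z\<in>K. norm (Top \<phi> z) \<le> C * M"
    if "Ok 1 I \<phi>" "\<forall>w\<in>U \<epsilon>. norm (\<phi> w) \<le> M" for \<phi> M
    using estimate[of \<phi> M] that by (simp add: Ok_def)
  with \<open>0 < \<epsilon>\<close> \<open>0 < C\<close> show ?thesis
    by blast
qed

lemma Top3_bound:
  assumes "closed K" "K \<inter> J = {}"
  shows "\<exists>\<epsilon>>0. \<exists>C>0. \<forall>\<psi>. Ok 3 I \<psi> \<longrightarrow>
           (\<forall>M. (\<forall>w\<in>U \<epsilon>. norm (\<psi> w) \<le> M) \<longrightarrow> (\<forall>z\<in>K. norm (Top3 \<psi> z) \<le> C * M))"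
proof -
  obtain \<epsilon> C where "0 < \<epsilon>" "0 < C" and estimate: "\<And>\<psi> M. Ok 3 I \<psi> \<Longrightarrow>
      (\<And>w. w \<in> U \<epsilon> \<Longrightarrow> norm (\<psi> w) \<le> M) \<Longrightarrow>
      uniform_limit K (\<lambda>n z. \<Sum>m=1..n. Lg3 m \<psi> z) (Top3 \<psi>) sequentially \<and> (\<forall>z\<in>K. norm (Top3 \<psi> z) \<le> C * M)"
    using Top3_estimate[OF assms] by metis
  have "\<forall>z\<in>K. norm (Top3 \<psi> z) \<le> C * M"
    if "Ok 3 I \<psi>" "\<forall>w\<in>U \<epsilon>. norm (\<psi> w) \<le> M" for \<psi> M
    using estimate[of \<psi> M] that by simp
  with \<open>0 < \<epsilon>\<close> \<open>0 < C\<close> show ?thesis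
    by blast
qed

lemma Top_uniform_limit:
  assumes "Ok 1 I \<phi>" "closed K" "K \<inter> J = {}"
  shows "uniform_limit K (\<lambda>n z. \<Sum>m=1..n. Lg m \<phi> z) (Top \<phi>) sequentially"
proof -
  obtain \<epsilon> C where "0 < \<epsilon>" and estimate: "\<And>\<phi> M. \<phi> holomorphic_on - I \<Longrightarrow>
      (\<And>w. w \<in> U \<epsilon> \<Longrightarrow> norm (\<phi> w) \<le> M) \<Longrightarrow>
      uniform_limit K (\<lambda>n z. \<Sum>m=1..n. Lg m \<phi> z) (Top \<phi>) sequentially \<and> (\<forall>z\<in>K. norm (Top \<phi> z) \<le> C * M)"
    using Top_estimate[OF assms(2,3)] by metis
  obtain M where "\<And>w. w \<in> U \<epsilon> \<Longrightarrow> norm (\<phi> w) \<le> M"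
    using Ok_bounded_on_U[of 1 \<phi> \<epsilon>] assms(1) \<open>0 < \<epsilon>\<close> by auto
  with estimate show ?thesis
    using assms(1) by (auto simp: Ok_def)
qed

lemma Top3_uniform_limit:
  assumes "Ok 3 I \<psi>" "closed K" "K \<inter> J = {}"
  shows "uniform_limit K (\<lambda>n z. \<Sum>m=1..n. Lg3 m \<psi> z) (Top3 \<psi>) sequentially"
proof -
  obtain \<epsilon> C where "0 < \<epsilon>" and estimate: "\<And>\<psi> M. Ok 3 I \<psi> \<Longrightarrow>
      (\<And>w. w \<in> U \<epsilon> \<Longrightarrow> norm (\<psi> w) \<le> M) \<Longrightarrow>
      uniform_limit K (\<lambda>n z. \<Sum>m=1..n. Lg3 m \<psi> z) (Top3 \<psi>) sequentially \<and> (\<forall>z\<in>K. norm (Top3 \<psi> z) \<le> C * M)"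
    using Top3_estimate[OF assms(2,3)] by metis
  obtain M where "\<And>w. w \<in> U \<epsilon> \<Longrightarrow> norm (\<psi> w) \<le> M"
    using Ok_bounded_on_U[of 3 \<psi> \<epsilon>] assms(1) \<open>0 < \<epsilon>\<close> by auto
  with estimate show ?thesis
    using assms(1) by blast
qed

lemma open_compl_J: "open (- J)"
  using compact_cinterval by (simp add: compact_imp_closed open_Compl)

lemma open_compl_I: "open (- I)"
  using compact_cinterval by (simp add: compact_imp_closed open_Compl)

lemma compl_J_subset: "1 \<le> m \<Longrightarrow> - J \<subseteq> {z. z \<noteq> 0 \<and> inverse z - of_nat m \<in> - I}"
  using inverse_shift_notin_I by auto

lemma holomorphic_on_compl_J:
  assumes hol: "\<And>m. 1 \<le> m \<Longrightarrow> f m holomorphic_on - J"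
    and lim: "\<And>K. closed K \<Longrightarrow> K \<inter> J = {} \<Longrightarrow>
                uniform_limit K (\<lambda>n z. \<Sum>m=1..n. f m z) F sequentially"
  shows "F holomorphic_on - J"
proof (rule holomorphic_uniform_sequence[OF open_compl_J])
  show "(\<lambda>z. \<Sum>m=1..n. f m z) holomorphic_on - J" for n
    using hol by (intro holomorphic_intros) auto
  fix x assume "x \<in> - J"
  then obtain d where "0 < d" "cball x d \<subseteq> - J"
    using open_compl_J open_contains_cball by blast
  moreover have "uniform_limit (cball x d) (\<lambda>n z. \<Sum>m=1..n. f m z) F sequentially"
    using \<open>cball x d \<subseteq> - J\<close> by (intro lim) auto
  ultimately show "\<exists>d>0. cball x d \<subseteq> - J \<and> uniform_limit (cball x d) (\<lambda>n z. \<Sum>m=1..n. f m z) F sequentially"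
    by blast
qed

lemma Top_holomorphic:
  assumes "Ok 1 I \<phi>"
  shows "Top \<phi> holomorphic_on - J"
proof (rule holomorphic_on_compl_J)
  have "\<phi> holomorphic_on - I"
    using assms by (simp add: Ok_def)
  then show "Lg m \<phi> holomorphic_on - J" if "1 \<le> m" for m
    by (rule holomorphic_on_subset[OF Lg_holomorphic compl_J_subset[OF that]])
qed (rule Top_uniform_limit[OF assms])

lemma Top3_holomorphic:
  assumes "Ok 3 I \<psi>"
  shows "Top3 \<psi> holomorphic_on - J"
proof (rule holomorphic_on_compl_J)
  have "\<psi> holomorphic_on - I"
    using assms by (simp add: Ok_def)
  then show "Lg3 m \<psi> holomorphic_on - J" if "1 \<le> m" for m
    by (rule holomorphic_on_subset[OF Lg3_holomorphic compl_J_subset[OF that]])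
qed (rule Top3_uniform_limit[OF assms])

lemma shift_in_U_diff_I:
  fixes w :: complex
  assumes "1 \<le> m" "\<epsilon> \<le> (1 + \<gamma>0) / 2" "norm w \<le> \<kappa> / 2"
  shows "w - of_nat m \<in> U \<epsilon> - I"
proof -
  have "\<kappa> * 1 \<le> \<kappa> * m"
    using \<kappa>_pos \<open>1 \<le> m\<close> by (intro mult_left_mono) auto
  then have "norm w \<le> \<kappa> * m"
    using assms(3) \<kappa>_pos by linarith
  then have "w - of_nat m \<in> cball (- of_nat m) (\<kappa> * m)"
    by (simp add: dist_norm)
  then show ?thesis
    using cball_neg_nat_subset[OF assms(1,2)] by blast
qed

lemma dslope_dslope_shift:
  assumes hol: "\<phi> holomorphic_on - I" and "\<epsilon> \<le> (1 + \<gamma>0) / 2"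
    and bound: "\<And>w. w \<in> U \<epsilon> \<Longrightarrow> norm (\<phi> w) \<le> M" and "1 \<le> m"
  shows "(\<lambda>w. dslope (dslope \<phi> (- of_nat m)) (- of_nat m) (w - of_nat m)) holomorphic_on ball 0 (\<kappa> / 2)"
    and "norm w \<le> \<kappa> / 2 \<Longrightarrow>
         norm (dslope (dslope \<phi> (- of_nat m)) (- of_nat m) (w - of_nat m)) \<le> 10 * M / \<kappa>\<^sup>2 / real m ^ 2"
proof -
  have sub: "cball (- of_nat m) (\<kappa> * m) \<subseteq> U \<epsilon> - I"
    by (rule cball_neg_nat_subset) fact+
  have "dslope (dslope \<phi> (- of_nat m)) (- of_nat m) holomorphic_on - I"
    using hol open_compl_I by (intro holomorphic_on_dslope)
  moreover have "(\<lambda>w. w - of_nat m) ` ball 0 (\<kappa> / 2) \<subseteq> - I"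
    using shift_in_U_diff_I[OF \<open>1 \<le> m\<close> \<open>\<epsilon> \<le> (1 + \<gamma>0) / 2\<close>] by force
  moreover have "(\<lambda>w. w - of_nat m) holomorphic_on ball 0 (\<kappa> / 2)"
    by (intro holomorphic_intros)
  ultimately show "(\<lambda>w. dslope (dslope \<phi> (- of_nat m)) (- of_nat m) (w - of_nat m)) holomorphic_on ball 0 (\<kappa> / 2)"
    using holomorphic_on_compose_gen[unfolded o_def] by blast
  show "norm (dslope (dslope \<phi> (- of_nat m)) (- of_nat m) (w - of_nat m)) \<le> 10 * M / \<kappa>\<^sup>2 / real m ^ 2"
    if "norm w \<le> \<kappa> / 2"
  proof -
    have "norm (dslope (dslope \<phi> (- of_nat m)) (- of_nat m) (w - of_nat m)) \<le> 10 * M / (\<kappa> * m)\<^sup>2"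
    proof (rule norm_dslope_dslope_le)
      show "\<phi> holomorphic_on cball (- of_nat m) (\<kappa> * m)"
        using sub by (blast intro: holomorphic_on_subset[OF hol])
      show "norm (\<phi> \<zeta>) \<le> M" if "\<zeta> \<in> cball (- of_nat m) (\<kappa> * m)" for \<zeta>
        using sub that bound by blast
      have "\<kappa> / 2 \<le> \<kappa> * m / 2"
        using \<kappa>_pos \<open>1 \<le> m\<close> by simp
      then show "norm (w - of_nat m - - of_nat m) \<le> \<kappa> * m / 2"
        using that by simp
    qed (use \<kappa>_pos \<open>1 \<le> m\<close> in simp)
    then show ?thesis
      by (simp add: power_mult_distrib)
  qed
qed

lemma Top_Ok:
  assumes Ok: "Ok 1 I \<phi>"
  shows "Ok 1 J (Top \<phi>)"
proof -
  have hol: "\<phi> holomorphic_on - I"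
    using Ok by (simp add: Ok_def)
  obtain M where bound: "\<And>w. w \<in> U ((1 + \<gamma>0) / 2) \<Longrightarrow> norm (\<phi> w) \<le> M"
    using Ok_bounded_on_U[of 1 \<phi> "(1 + \<gamma>0) / 2"] Ok \<gamma>0_gt by auto
  define D where "D = (\<lambda>m w. dslope (dslope \<phi> (- of_nat m)) (- of_nat m) (w - of_nat m))"
  have D_hol: "D m holomorphic_on ball 0 (\<kappa> / 2)" if "1 \<le> m" for m
    unfolding D_def using dslope_dslope_shift(1)[OF hol order_refl bound that] by simp
  have D_bound: "norm (D m w) \<le> 10 * M / \<kappa>\<^sup>2 / real m ^ 2" if "1 \<le> m" "w \<in> ball 0 (\<kappa> / 2)" for m w
    unfolding D_def using dslope_dslope_shift(2)[OF hol order_refl bound that(1)] that(2) by simp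
  define G where "G = (\<lambda>w. - (\<Sum>m. D (Suc m) w))"
  have "G holomorphic_on ball 0 (\<kappa> / 2)"
    unfolding G_def using holomorphic_on_inverse_square_series[OF open_ball D_hol D_bound]
    by (intro holomorphic_intros)
  moreover have "Top \<phi> (inverse w) = w powi 1 * G w" if "0 < norm w" "norm w < \<kappa> / 2" for w
  proof -
    have "Top \<phi> (inverse w) = (\<Sum>m. - w * D (Suc m) w)"
      using that by (simp add: Top_def Lg_eq_dslope D_def)
    also have "\<dots> = - w * (\<Sum>m. D (Suc m) w)"
      using inverse_square_summable(1)[of "\<lambda>m. D m w" "10 * M / \<kappa>\<^sup>2"] D_bound that
      by (intro suminf_mult) auto
    finally show ?thesis
      by (simp add: G_def)
  qed
  ultimately show ?thesis
    unfolding Ok_def using Top_holomorphic[OF Ok] \<kappa>_pos by (metis half_gt_zero)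
qed

lemma Top3_Ok:
  assumes Ok: "Ok 3 I \<psi>"
  shows "Ok 1 J (Top3 \<psi>)"
proof -
  have hol: "\<psi> holomorphic_on - I"
    using Ok by (simp add: Ok_def)
  define \<epsilon> where "\<epsilon> = min (1/2) ((1 + \<gamma>0) / 2)"
  have "0 < \<epsilon>"
    using \<gamma>0_gt by (simp add: \<epsilon>_def)
  have "\<epsilon> \<le> 1/2" "\<epsilon> \<le> (1 + \<gamma>0) / 2"
    unfolding \<epsilon>_def by (rule min.cobounded1, rule min.cobounded2)
  obtain M where bound: "\<And>w. w \<in> U \<epsilon> \<Longrightarrow> norm (\<psi> w) \<le> M"
    using Ok_bounded_on_U[of 3 \<psi> \<epsilon>] Ok \<open>0 < \<epsilon>\<close> by auto
  define r where "r = \<kappa> / 2"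
  have shift_in: "w - of_nat m \<in> U \<epsilon> - I" if "1 \<le> m" "w \<in> ball 0 r" for m w
    using shift_in_U_diff_I[OF that(1) \<open>\<epsilon> \<le> (1 + \<gamma>0) / 2\<close>] that(2) by (simp add: r_def)
  have shift_hol: "(\<lambda>w. \<psi> (w - of_nat m)) holomorphic_on ball 0 r" if "1 \<le> m" for m
    using shift_in[OF that]
    by (intro holomorphic_on_compose_gen[OF _ hol, unfolded o_def]) (auto intro!: holomorphic_intros)
  have shift_bound: "norm (\<psi> (w - of_nat m)) \<le> M * (r + \<rho>) ^ 3 / real m ^ 2"
    if "1 \<le> m" "w \<in> ball 0 r" for m w
    using shift_in[OF that] that by (intro norm_Ok3_shift_le[OF Ok \<open>\<epsilon> \<le> 1/2\<close> bound]) auto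
  define G where "G = (\<lambda>w. - w\<^sup>2 * (\<Sum>m. \<psi> (w - of_nat (Suc m))))"
  have "G holomorphic_on ball 0 r"
    unfolding G_def
    using holomorphic_on_inverse_square_series[of _ "\<lambda>m w. \<psi> (w - of_nat m)", OF open_ball shift_hol shift_bound]
    by (intro holomorphic_intros)
  moreover have "Top3 \<psi> (inverse w) = w powi 1 * G w" if "0 < norm w" "norm w < r" for w
  proof -
    have "Top3 \<psi> (inverse w) = (\<Sum>m. - (w ^ 3) * \<psi> (w - of_nat (Suc m)))"
      by (simp add: Top3_def Lg3_def)
    also have "\<dots> = - (w ^ 3) * (\<Sum>m. \<psi> (w - of_nat (Suc m)))"
      using inverse_square_summable(1)[of "\<lambda>m. \<psi> (w - of_nat m)"] shift_bound that
      by (intro suminf_mult) auto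
    finally show ?thesis
      by (simp add: G_def power2_eq_square power3_eq_cube)
  qed
  moreover have "0 < r"
    using \<kappa>_pos by (simp add: r_def)
  ultimately show ?thesis
    unfolding Ok_def using Top3_holomorphic[OF Ok] by blast
qed

lemma Top3_deriv_deriv:
  assumes Ok: "Ok 1 I \<phi>" and "z \<notin> J"
  shows "Top3 (deriv (deriv \<phi>)) z = deriv (deriv (Top \<phi>)) z"
proof -
  have hol: "\<phi> holomorphic_on - I"
    using Ok by (simp add: Ok_def)
  have Lg_hol: "Lg m \<phi> holomorphic_on - J" if "1 \<le> m" for m
    using holomorphic_on_subset[OF Lg_holomorphic[OF hol] compl_J_subset[OF that]] .
  obtain d where "0 < d" "cball z d \<subseteq> - J"
    using open_compl_J open_contains_cball \<open>z \<notin> J\<close> by blast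
  then have "uniform_limit (cball z d) (\<lambda>n w. \<Sum>m=1..n. Lg m \<phi> w) (Top \<phi>) sequentially"
    by (intro Top_uniform_limit[OF Ok]) auto
  then have "uniform_limit (ball z d) (\<lambda>n w. \<Sum>m=1..n. Lg m \<phi> w) (Top \<phi>) sequentially"
    by (rule uniform_limit_on_subset) (rule ball_subset_cball)
  moreover have "ball z d \<subseteq> - J"
    using \<open>cball z d \<subseteq> - J\<close> ball_subset_cball by blast
  then have "(\<lambda>w. \<Sum>m=1..n. Lg m \<phi> w) holomorphic_on ball z d" for n
    by (intro holomorphic_intros) (use Lg_hol holomorphic_on_subset in force)
  ultimately have "(\<lambda>n. (deriv ^^ 2) (\<lambda>w. \<Sum>m=1..n. Lg m \<phi> w) z) \<longlonglongrightarrow> (deriv ^^ 2) (Top \<phi>) z"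
    using \<open>0 < d\<close> by (intro higher_deriv_complex_uniform_limit) auto
  moreover have "(deriv ^^ 2) (\<lambda>w. \<Sum>m=1..n. Lg m \<phi> w) z = (\<Sum>m=1..n. Lg3 m (deriv (deriv \<phi>)) z)" for n
  proof -
    have "(deriv ^^ 2) (\<lambda>w. \<Sum>m=1..n. Lg m \<phi> w) z = (\<Sum>m=1..n. (deriv ^^ 2) (Lg m \<phi>) z)"
      by (rule higher_deriv_sum[OF _ open_compl_J]) (use \<open>z \<notin> J\<close> Lg_hol in auto)
    also have "\<dots> = (\<Sum>m=1..n. Lg3 m (deriv (deriv \<phi>)) z)"
      using inverse_shift_notin_I[OF \<open>z \<notin> J\<close>]
      by (intro sum.cong refl) (auto simp: numeral_2_eq_2 intro!: deriv_deriv_Lg[OF hol open_compl_I])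
    finally show ?thesis .
  qed
  ultimately have "(\<lambda>n. \<Sum>m=1..n. Lg3 m (deriv (deriv \<phi>)) z) \<longlonglongrightarrow> deriv (deriv (Top \<phi>)) z"
    by (simp add: numeral_2_eq_2)
  then have "(\<lambda>n. \<Sum>i<n. Lg3 (Suc i) (deriv (deriv \<phi>)) z) \<longlonglongrightarrow> deriv (deriv (Top \<phi>)) z"
    unfolding sum_atLeast1_atMost_Suc .
  then show ?thesis
    unfolding Top3_def by (simp add: sums_def sums_unique[symmetric])
qed

end

theorem proposition3p1:
  fixes \<gamma>0 \<gamma>1 :: real
  assumes "-1 < \<gamma>0" and "\<gamma>0 < \<gamma>1"
  defines "I \<equiv> cinterval \<gamma>0 \<gamma>1"
      and "J \<equiv> cinterval 0 (1 / (1 + \<gamma>0))"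
  shows
    "(\<forall>\<phi>. Ok 1 I \<phi> \<longrightarrow>
        Ok 1 J (Top \<phi>) \<and>
        (\<forall>K. closed K \<and> K \<inter> J = {} \<longrightarrow>
           uniform_limit K (\<lambda>n z. \<Sum>m=1..n. Lg m \<phi> z) (Top \<phi>) sequentially))
     \<and> (\<forall>K. closed K \<and> K \<inter> J = {} \<longrightarrow>
          (\<exists>\<epsilon>>0. \<exists>C>0. \<forall>\<phi>. Ok 1 I \<phi> \<longrightarrow>
             (\<forall>M. (\<forall>w\<in>Ueps \<gamma>0 \<gamma>1 \<epsilon>. norm (\<phi> w) \<le> M) \<longrightarrow>
                  (\<forall>z\<in>K. norm (Top \<phi> z) \<le> C * M))))
     \<and> (\<forall>\<psi>. Ok 3 I \<psi> \<longrightarrow>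
        Ok 1 J (Top3 \<psi>) \<and>
        (\<forall>K. closed K \<and> K \<inter> J = {} \<longrightarrow>
           uniform_limit K (\<lambda>n z. \<Sum>m=1..n. Lg3 m \<psi> z) (Top3 \<psi>) sequentially))
     \<and> (\<forall>K. closed K \<and> K \<inter> J = {} \<longrightarrow>
          (\<exists>\<epsilon>>0. \<exists>C>0. \<forall>\<psi>. Ok 3 I \<psi> \<longrightarrow>
             (\<forall>M. (\<forall>w\<in>Ueps \<gamma>0 \<gamma>1 \<epsilon>. norm (\<psi> w) \<le> M) \<longrightarrow>
                  (\<forall>z\<in>K. norm (Top3 \<psi> z) \<le> C * M))))
     \<and> (\<forall>\<phi>. Ok 1 I \<phi> \<longrightarrow>
        (\<forall>z\<in>- J. Top3 (deriv (deriv \<phi>)) z = deriv (deriv (Top \<phi>)) z))"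
proof -
  interpret gauss_transfer \<gamma>0 \<gamma>1
    by unfold_locales (fact assms(1))
  show ?thesis
    unfolding I_def J_def
    by (intro conjI allI impI ballI)
      (blast intro: Top_Ok Top_uniform_limit Top_bound Top3_Ok Top3_uniform_limit Top3_bound
        Top3_deriv_deriv)+
qed

end
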